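(* Let $(A,\succ,\prec)$ be a finite-dimensional dendriform algebra with associated associative product $*$, and let $r\in A\otimes A$ be symmetric ($\sigma(r)=r$) and satisfy the $D$-equation $r_{12}*r_{13}=r_{13}\prec r_{23}+r_{23}\succ r_{12}$. Define $\Delta_\succ(x)=-(\mathrm{id}\otimes L(x)-R_\prec(x)\otimes\mathrm{id})r$ and $\Delta_\prec(x)=(\mathrm{id}\otimes L_\succ(x)-R(x)\otimes\mathrm{id})r$. Then the products $\langle a^*\succ_{A^*}b^*,x\rangle=\langle a^*\otimes b^*,\Delta_\succ(x)\rangle$, $\langle a^*\prec_{A^*}b^*,x\rangle=\langle a^*\otimes b^*,\Delta_\prec(x)\rangle$ define a dendriform algebra on $A^*$, and $(A,A^* )$ is a dendriform D-bialgebra.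
   Context: A dendriform algebra is a vector space with bilinear products $\prec,\succ$ such that, writing $x*y=x\prec y+x\succ y$: $(x\prec y)\prec z=x\prec(y*z)$, $(x\succ y)\prec z=x\succ(y\prec z)$, $x\succ(y\succ z)=(x*y)\succ z$. Notation: $L_\succ(x)y=x\succ y$, $R_\succ(x)y=y\succ x$, $L_\prec(x)y=x\prec y$, $R_\prec(x)y=y\prec x$, $L=L_\succ+L_\prec$, $R=R_\succ+R_\prec$; subscripts $A$, $A^*$ indicate the algebra. $\sigma(u\otimes v)=v\otimes u$. For $r=\sum_i x_i\otimes y_i$: $r_{12}*r_{13}=\sum_{i,j}x_i*x_j\otimes y_i\otimes y_j$, $r_{13}\prec r_{23}=\sum_{i,j}x_i\otimes x_j\otimes y_i\prec y_j$, $r_{23}\succ r_{12}=\sum_{i,j}x_j\otimes x_i\succ y_j\otimes y_i$. Dendriform D-bialgebra: given dendriform algebras $(A,\succ_A,\prec_A)$, $(A^*,\succ_{A^*},\prec_{A^*})$ with associated products $*_A,*_{A^*}$, let $\langle\beta_\succ(a^* ),x\otimes y\rangle=\langle a^*,x\succ_Ay\rangle$, $\langle\beta_\prec(a^* ),x\otimes y\rangle=\langle a^*,x\prec_Ay\rangle$, $\langle\Delta_\succ(x),a^*\otimes b^*\rangle=\langle x,a^*\succ_{A^*}b^*\rangle$, $\langle\Delta_\prec(x),a^*\otimes b^*\rangle=\langle x,a^*\prec_{A^*}b^*\rangle$. The pair $(A,A^* )$ is a dendriform D-bialgebra if for all $x,y\in A$, $a^*,b^*\in A^*$: (1) $\Delta_\prec(x*_Ay)=(\mathrm{id}\otimes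 L_{\succ_A}(x))\Delta_\prec(y)+(R_A(y)\otimes\mathrm{id})\Delta_\prec(x)$; (2) $\Delta_\succ(x*_Ay)=(\mathrm{id}\otimes L_A(x))\Delta_\succ(y)+(R_{\prec_A}(y)\otimes\mathrm{id})\Delta_\succ(x)$; (3) $\beta_\prec(a^**_{A^*}b^* )=(\mathrm{id}\otimes L_{\succ_{A^*}}(a^* ))\beta_\prec(b^* )+(R_{A^*}(b^* )\otimes\mathrm{id})\beta_\prec(a^* )$; (4) $\beta_\succ(a^**_{A^*}b^* )=(\mathrm{id}\otimes L_{A^*}(a^* ))\beta_\succ(b^* )+(R_{\prec_{A^*}}(b^* )\otimes\mathrm{id})\beta_\succ(a^* )$; (5) $(L_A(x)\otimes\mathrm{id}-\mathrm{id}\otimes R_{\prec_A}(x))\Delta_\prec(y)+\sigma[(L_{\succ_A}(y)\otimes\mathrm{id}-\mathrm{id}\otimes R_A(y))\Delta_\succ(x)]=0$; (6) $(L_{A^*}(a^* )\otimes\mathrm{id}-\mathrm{id}\otimes R_{\prec_{A^*}}(a^* ))\beta_\prec(b^* )+\sigma[(L_{\succ_{A^*}}(b^* )\otimes\mathrm{id}-\mathrm{id}\otimes R_{A^*}(b^* ))\beta_\succ(a^* )]=0$. *)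

theory Defs
  imports Main
begin

text \<open>
Finite-dimensional vector spaces over a field 'k are modelled in coordinates:
a basis is indexed by a finite type 'i, a vector of A is a function 'i => 'k,
the dual space A* is identified with 'i => 'k via the dual basis and the
pairing pair a x = sum_i a_i x_i.  Elements of A (x) A are 'i => 'i => 'k
(coefficients w.r.t. e_i (x) e_j), elements of A (x) A (x) A are
'i => 'i => 'i => 'k.  A bilinear product is given by structure constants
c i j k = k-th coordinate of e_i . e_j.
\<close>

definition bvec :: "'i \<Rightarrow> 'i \<Rightarrow> 'k::field" where
  "bvec i = (\<lambda>j. if j = i then 1 else 0)"

definition pair :: "('i::finite \<Rightarrow> 'k::field) \<Rightarrow> ('i \<Rightarrow> 'k) \<Rightarrow> 'k" where
  "pair a x = (\<Sum>i\<in>UNIV. a i * x i)"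

definition bprod :: "('i::finite \<Rightarrow> 'i \<Rightarrow> 'i \<Rightarrow> 'k::field) \<Rightarrow> ('i \<Rightarrow> 'k) \<Rightarrow> ('i \<Rightarrow> 'k) \<Rightarrow> ('i \<Rightarrow> 'k)" where
  "bprod c x y = (\<lambda>k. \<Sum>i\<in>UNIV. \<Sum>j\<in>UNIV. x i * y j * c i j k)"

text \<open>associated product x * y = x \<succ> y + x \<prec> y (cs: constants of \<succ>, cp: constants of \<prec>)\<close>
definition aprod :: "('i::finite \<Rightarrow> 'i \<Rightarrow> 'i \<Rightarrow> 'k::field) \<Rightarrow> ('i \<Rightarrow> 'i \<Rightarrow> 'i \<Rightarrow> 'k) \<Rightarrow> ('i \<Rightarrow> 'k) \<Rightarrow> ('i \<Rightarrow> 'k) \<Rightarrow> ('i \<Rightarrow> 'k)" where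
  "aprod cs cp x y = (\<lambda>k. bprod cs x y k + bprod cp x y k)"

definition dendriform :: "('i::finite \<Rightarrow> 'i \<Rightarrow> 'i \<Rightarrow> 'k::field) \<Rightarrow> ('i \<Rightarrow> 'i \<Rightarrow> 'i \<Rightarrow> 'k) \<Rightarrow> bool" where
  "dendriform cs cp \<longleftrightarrow>
    (\<forall>x y z.
      bprod cp (bprod cp x y) z = bprod cp x (aprod cs cp y z) \<and>
      bprod cp (bprod cs x y) z = bprod cs x (bprod cp y z) \<and>
      bprod cs x (bprod cs y z) = bprod cs (aprod cs cp x y) z)"

definition tens2 :: "('i \<Rightarrow> 'k::field) \<Rightarrow> ('i \<Rightarrow> 'k) \<Rightarrow> 'i \<Rightarrow> 'i \<Rightarrow> 'k" where
  "tens2 x y = (\<lambda>a b. x a * y b)"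

definition tens3 :: "('i \<Rightarrow> 'k::field) \<Rightarrow> ('i \<Rightarrow> 'k) \<Rightarrow> ('i \<Rightarrow> 'k) \<Rightarrow> 'i \<Rightarrow> 'i \<Rightarrow> 'i \<Rightarrow> 'k" where
  "tens3 x y z = (\<lambda>a b c. x a * y b * z c)"

text \<open>(f (x) g) t for linear maps f g (determined by their values on the basis)\<close>
definition tmap :: "(('i::finite \<Rightarrow> 'k::field) \<Rightarrow> ('i \<Rightarrow> 'k)) \<Rightarrow> (('i \<Rightarrow> 'k) \<Rightarrow> ('i \<Rightarrow> 'k)) \<Rightarrow> ('i \<Rightarrow> 'i \<Rightarrow> 'k) \<Rightarrow> 'i \<Rightarrow> 'i \<Rightarrow> 'k" where
  "tmap f g t = (\<lambda>a b. \<Sum>p\<in>UNIV. \<Sum>q\<in>UNIV. t p q * tens2 (f (bvec p)) (g (bvec q)) a b)"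

definition flip :: "('i \<Rightarrow> 'i \<Rightarrow> 'k) \<Rightarrow> 'i \<Rightarrow> 'i \<Rightarrow> 'k" where
  "flip t = (\<lambda>a b. t b a)"

definition t2add :: "('i \<Rightarrow> 'i \<Rightarrow> 'k::field) \<Rightarrow> ('i \<Rightarrow> 'i \<Rightarrow> 'k) \<Rightarrow> 'i \<Rightarrow> 'i \<Rightarrow> 'k" where
  "t2add s t = (\<lambda>a b. s a b + t a b)"

definition t2sub :: "('i \<Rightarrow> 'i \<Rightarrow> 'k::field) \<Rightarrow> ('i \<Rightarrow> 'i \<Rightarrow> 'k) \<Rightarrow> 'i \<Rightarrow> 'i \<Rightarrow> 'k" where
  "t2sub s t = (\<lambda>a b. s a b - t a b)"

definition Lop :: "('i::finite \<Rightarrow> 'i \<Rightarrow> 'i \<Rightarrow> 'k::field) \<Rightarrow> ('i \<Rightarrow> 'k) \<Rightarrow> ('i \<Rightarrow> 'k) \<Rightarrow> ('i \<Rightarrow> 'k)" where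
  "Lop c x = (\<lambda>y. bprod c x y)"

definition Rop :: "('i::finite \<Rightarrow> 'i \<Rightarrow> 'i \<Rightarrow> 'k::field) \<Rightarrow> ('i \<Rightarrow> 'k) \<Rightarrow> ('i \<Rightarrow> 'k) \<Rightarrow> ('i \<Rightarrow> 'k)" where
  "Rop c x = (\<lambda>y. bprod c y x)"

definition Lsum :: "('i::finite \<Rightarrow> 'i \<Rightarrow> 'i \<Rightarrow> 'k::field) \<Rightarrow> ('i \<Rightarrow> 'i \<Rightarrow> 'i \<Rightarrow> 'k) \<Rightarrow> ('i \<Rightarrow> 'k) \<Rightarrow> ('i \<Rightarrow> 'k) \<Rightarrow> ('i \<Rightarrow> 'k)" where
  "Lsum cs cp x = (\<lambda>y. aprod cs cp x y)"

definition Rsum :: "('i::finite \<Rightarrow> 'i \<Rightarrow> 'i \<Rightarrow> 'k::field) \<Rightarrow> ('i \<Rightarrow> 'i \<Rightarrow> 'i \<Rightarrow> 'k) \<Rightarrow> ('i \<Rightarrow> 'k) \<Rightarrow> ('i \<Rightarrow> 'k) \<Rightarrow> ('i \<Rightarrow> 'k)" where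
  "Rsum cs cp x = (\<lambda>y. aprod cs cp y x)"

text \<open>The comultiplication of A induced by a product on A* with structure constants d
  (in dual-basis coordinates): <Delta(x), a (x) b> = <x, a . b>.\<close>
definition cobr :: "('i::finite \<Rightarrow> 'i \<Rightarrow> 'i \<Rightarrow> 'k::field) \<Rightarrow> ('i \<Rightarrow> 'k) \<Rightarrow> 'i \<Rightarrow> 'i \<Rightarrow> 'k" where
  "cobr d x = (\<lambda>i j. pair x (bprod d (bvec i) (bvec j)))"

text \<open>Conditions (1),(2),(5) of a dendriform D-bialgebra for the algebra (cs,cp),
  with comultiplications induced by the products (ds,dp) on the dual.
  Applied with the roles swapped they give (3),(4),(6).\<close>
definition Dcond :: "('i::finite \<Rightarrow> 'i \<Rightarrow> 'i \<Rightarrow> 'k::field) \<Rightarrow> ('i \<Rightarrow> 'i \<Rightarrow> 'i \<Rightarrow> 'k)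
    \<Rightarrow> ('i \<Rightarrow> 'i \<Rightarrow> 'i \<Rightarrow> 'k) \<Rightarrow> ('i \<Rightarrow> 'i \<Rightarrow> 'i \<Rightarrow> 'k) \<Rightarrow> bool" where
  "Dcond cs cp ds dp \<longleftrightarrow>
    (\<forall>x y.
      cobr dp (aprod cs cp x y) =
        t2add (tmap id (Lop cs x) (cobr dp y)) (tmap (Rsum cs cp y) id (cobr dp x)) \<and>
      cobr ds (aprod cs cp x y) =
        t2add (tmap id (Lsum cs cp x) (cobr ds y)) (tmap (Rop cp y) id (cobr ds x)) \<and>
      t2add (t2sub (tmap (Lsum cs cp x) id (cobr dp y)) (tmap id (Rop cp x) (cobr dp y)))
            (flip (t2sub (tmap (Lop cs y) id (cobr ds x)) (tmap id (Rsum cs cp y) (cobr ds x))))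
        = (\<lambda>a b. 0))"

text \<open>(A, A*) with A given by (cs,cp), A* given by (ds,dp) in the dual basis.\<close>
definition D_bialgebra :: "('i::finite \<Rightarrow> 'i \<Rightarrow> 'i \<Rightarrow> 'k::field) \<Rightarrow> ('i \<Rightarrow> 'i \<Rightarrow> 'i \<Rightarrow> 'k)
    \<Rightarrow> ('i \<Rightarrow> 'i \<Rightarrow> 'i \<Rightarrow> 'k) \<Rightarrow> ('i \<Rightarrow> 'i \<Rightarrow> 'i \<Rightarrow> 'k) \<Rightarrow> bool" where
  "D_bialgebra cs cp ds dp \<longleftrightarrow>
     dendriform cs cp \<and> dendriform ds dp \<and> Dcond cs cp ds dp \<and> Dcond ds dp cs cp"

definition tsym :: "('i \<Rightarrow> 'i \<Rightarrow> 'k) \<Rightarrow> bool" where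
  "tsym r \<longleftrightarrow> flip r = r"

text \<open>r = sum_{(p,q)} x_{pq} (x) y_{pq} with x_{pq} = r p q e_p, y_{pq} = e_q\<close>
definition r12_star_r13 :: "('i::finite \<Rightarrow> 'i \<Rightarrow> 'i \<Rightarrow> 'k::field) \<Rightarrow> ('i \<Rightarrow> 'i \<Rightarrow> 'i \<Rightarrow> 'k) \<Rightarrow> ('i \<Rightarrow> 'i \<Rightarrow> 'k) \<Rightarrow> 'i \<Rightarrow> 'i \<Rightarrow> 'i \<Rightarrow> 'k" where
  "r12_star_r13 cs cp r = (\<lambda>a b c. \<Sum>p\<in>UNIV. \<Sum>q\<in>UNIV. \<Sum>s\<in>UNIV. \<Sum>t\<in>UNIV.
     r p q * r s t * tens3 (aprod cs cp (bvec p) (bvec s)) (bvec q) (bvec t) a b c)"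

definition r13_prec_r23 :: "('i::finite \<Rightarrow> 'i \<Rightarrow> 'i \<Rightarrow> 'k::field) \<Rightarrow> ('i \<Rightarrow> 'i \<Rightarrow> 'k) \<Rightarrow> 'i \<Rightarrow> 'i \<Rightarrow> 'i \<Rightarrow> 'k" where
  "r13_prec_r23 cp r = (\<lambda>a b c. \<Sum>p\<in>UNIV. \<Sum>q\<in>UNIV. \<Sum>s\<in>UNIV. \<Sum>t\<in>UNIV.
     r p q * r s t * tens3 (bvec p) (bvec s) (bprod cp (bvec q) (bvec t)) a b c)"

definition r23_succ_r12 :: "('i::finite \<Rightarrow> 'i \<Rightarrow> 'i \<Rightarrow> 'k::field) \<Rightarrow> ('i \<Rightarrow> 'i \<Rightarrow> 'k) \<Rightarrow> 'i \<Rightarrow> 'i \<Rightarrow> 'i \<Rightarrow> 'k" where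
  "r23_succ_r12 cs r = (\<lambda>a b c. \<Sum>p\<in>UNIV. \<Sum>q\<in>UNIV. \<Sum>s\<in>UNIV. \<Sum>t\<in>UNIV.
     r p q * r s t * tens3 (bvec s) (bprod cs (bvec p) (bvec t)) (bvec q) a b c)"

definition D_equation :: "('i::finite \<Rightarrow> 'i \<Rightarrow> 'i \<Rightarrow> 'k::field) \<Rightarrow> ('i \<Rightarrow> 'i \<Rightarrow> 'i \<Rightarrow> 'k) \<Rightarrow> ('i \<Rightarrow> 'i \<Rightarrow> 'k) \<Rightarrow> bool" where
  "D_equation cs cp r \<longleftrightarrow>
     r12_star_r13 cs cp r = (\<lambda>a b c. r13_prec_r23 cp r a b c + r23_succ_r12 cs r a b c)"

definition Delta_succ_r :: "('i::finite \<Rightarrow> 'i \<Rightarrow> 'i \<Rightarrow> 'k::field) \<Rightarrow> ('i \<Rightarrow> 'i \<Rightarrow> 'i \<Rightarrow> 'k) \<Rightarrow> ('i \<Rightarrow> 'i \<Rightarrow> 'k) \<Rightarrow> ('i \<Rightarrow> 'k) \<Rightarrow> 'i \<Rightarrow> 'i \<Rightarrow> 'k" where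
  "Delta_succ_r cs cp r x = (\<lambda>a b. - t2sub (tmap id (Lsum cs cp x) r) (tmap (Rop cp x) id r) a b)"

definition Delta_prec_r :: "('i::finite \<Rightarrow> 'i \<Rightarrow> 'i \<Rightarrow> 'k::field) \<Rightarrow> ('i \<Rightarrow> 'i \<Rightarrow> 'i \<Rightarrow> 'k) \<Rightarrow> ('i \<Rightarrow> 'i \<Rightarrow> 'k) \<Rightarrow> ('i \<Rightarrow> 'k) \<Rightarrow> 'i \<Rightarrow> 'i \<Rightarrow> 'k" where
  "Delta_prec_r cs cp r x = t2sub (tmap id (Lop cs x) r) (tmap (Rsum cs cp x) id r)"

text \<open>Structure constants of the induced products on A*:
  <a \<succ> b, e_k> = <a (x) b, Delta_succ(e_k)>, i.e. (e^i \<succ> e^j)_k = Delta_succ(e_k)_{ij}.\<close>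
definition dual_succ :: "('i::finite \<Rightarrow> 'i \<Rightarrow> 'i \<Rightarrow> 'k::field) \<Rightarrow> ('i \<Rightarrow> 'i \<Rightarrow> 'i \<Rightarrow> 'k) \<Rightarrow> ('i \<Rightarrow> 'i \<Rightarrow> 'k) \<Rightarrow> 'i \<Rightarrow> 'i \<Rightarrow> 'i \<Rightarrow> 'k" where
  "dual_succ cs cp r = (\<lambda>i j k. Delta_succ_r cs cp r (bvec k) i j)"

definition dual_prec :: "('i::finite \<Rightarrow> 'i \<Rightarrow> 'i \<Rightarrow> 'k::field) \<Rightarrow> ('i \<Rightarrow> 'i \<Rightarrow> 'i \<Rightarrow> 'k) \<Rightarrow> ('i \<Rightarrow> 'i \<Rightarrow> 'k) \<Rightarrow> 'i \<Rightarrow> 'i \<Rightarrow> 'i \<Rightarrow> 'k" where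
  "dual_prec cs cp r = (\<lambda>i j k. Delta_prec_r cs cp r (bvec k) i j)"

end

theory Submission
  imports Defs
begin

(* Conditions (1), (2), (5): Delta_prec(x) = (id (x) L_succ(x) - R(x) (x) id) r and
   Delta_succ are built from the representations L_succ, L, R_prec, R of A, so
   (1), (2) follow from functoriality and (5) from sigma(r) = r together with
   commutation of left and right multiplications.  Conditions (3), (4), (6) are
   transposed into identities for Delta_succ + Delta_prec on A, proved likewise.

   Dendriform axioms of A*: they are transposes of co-dendriform identities for
   Delta_succ, Delta_prec.  Both sides of each identity expand to quartic sums
   over r (x) r whose difference is a difference of two instances of the
   D-equation, up to terms cancelling by the symmetries of r (x) r. *)

section \<open>Linear algebra in coordinates\<close>

lemma bvec_sums [simp]:
  fixes u :: "'i::finite \<Rightarrow> 'k::field"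
  shows "(\<Sum>m\<in>UNIV. u m * bvec m a) = u a" and "(\<Sum>m\<in>UNIV. bvec p m * u m) = u p"
    and "(\<Sum>m\<in>UNIV. bvec m a * u m) = u a" and "(\<Sum>m\<in>UNIV. u m * bvec p m) = u p"
  by (simp_all add: bvec_def if_distrib[where f="\<lambda>c. c * _"] if_distrib[where f="\<lambda>c. _ * c"] cong: if_cong)

lemma sum_rotate3:
  "(\<Sum>a\<in>A. \<Sum>b\<in>B. \<Sum>c\<in>C. F a b c) = (\<Sum>c\<in>C. \<Sum>a\<in>A. \<Sum>b\<in>B. F a b c)"
  by (subst sum.swap) (rule sum.swap)

lemma sum_reverse3:
  "(\<Sum>q\<in>A. \<Sum>v\<in>B. \<Sum>u\<in>C. F q v u) = (\<Sum>u\<in>C. \<Sum>v\<in>B. \<Sum>q\<in>A. F q v u)"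
  by (subst sum_rotate3) (rule sum.cong[OF refl], rule sum.swap)

lemma sum_rotate4:
  "(\<Sum>a\<in>A. \<Sum>b\<in>B. \<Sum>c\<in>C. \<Sum>d\<in>D. F a b c d) = (\<Sum>d\<in>D. \<Sum>a\<in>A. \<Sum>b\<in>B. \<Sum>c\<in>C. F a b c d)"
proof -
  have "(\<Sum>a\<in>A. \<Sum>b\<in>B. \<Sum>c\<in>C. \<Sum>d\<in>D. F a b c d) = (\<Sum>a\<in>A. \<Sum>d\<in>D. \<Sum>b\<in>B. \<Sum>c\<in>C. F a b c d)"
    by (intro sum.cong refl sum_rotate3)
  also have "\<dots> = (\<Sum>d\<in>D. \<Sum>a\<in>A. \<Sum>b\<in>B. \<Sum>c\<in>C. F a b c d)" by (rule sum.swap)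
  finally show ?thesis .
qed

lemma sum_swap_pairs:
  "(\<Sum>a\<in>A. \<Sum>b\<in>B. \<Sum>c\<in>C. \<Sum>d\<in>D. F a b c d) = (\<Sum>c\<in>C. \<Sum>d\<in>D. \<Sum>a\<in>A. \<Sum>b\<in>B. F a b c d)"
  by (subst sum_rotate4, subst sum_rotate4, rule refl)

definition coord_linear :: "(('i::finite \<Rightarrow> 'k::field) \<Rightarrow> 'k) \<Rightarrow> bool" where
  "coord_linear f \<longleftrightarrow> (\<forall>u. f u = (\<Sum>m\<in>UNIV. u m * f (bvec m)))"

definition coord_linear_map :: "(('i::finite \<Rightarrow> 'k::field) \<Rightarrow> 'i \<Rightarrow> 'k) \<Rightarrow> bool" where
  "coord_linear_map f \<longleftrightarrow> (\<forall>a. coord_linear (\<lambda>u. f u a))"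

lemma coord_linearD: "coord_linear f \<Longrightarrow> f u = (\<Sum>m\<in>UNIV. u m * f (bvec m))"
  unfolding coord_linear_def by blast

lemma coord_linear_mapD: "coord_linear_map f \<Longrightarrow> f u a = (\<Sum>m\<in>UNIV. u m * f (bvec m) a)"
  unfolding coord_linear_map_def coord_linear_def by blast

lemma coord_linear_eval: "coord_linear (\<lambda>u. u i)"
  by (simp add: coord_linear_def bvec_def if_distrib[where f="\<lambda>c. _ * c"] cong: if_cong)

lemma coord_linear_diff:
  assumes f: "coord_linear f" and g: "coord_linear g"
  shows "coord_linear (\<lambda>u. f u - g u)"
  unfolding coord_linear_def
proof
  fix u
  have "f u - g u = (\<Sum>m\<in>UNIV. u m * f (bvec m)) - (\<Sum>m\<in>UNIV. u m * g (bvec m))"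
    by (simp only: coord_linearD[OF f, of u] coord_linearD[OF g, of u])
  then show "f u - g u = (\<Sum>m\<in>UNIV. u m * (f (bvec m) - g (bvec m)))"
    by (simp add: right_diff_distrib sum_subtractf)
qed

lemma coord_linear_add:
  assumes f: "coord_linear f" and g: "coord_linear g"
  shows "coord_linear (\<lambda>u. f u + g u)"
  unfolding coord_linear_def
proof
  fix u
  have "f u + g u = (\<Sum>m\<in>UNIV. u m * f (bvec m)) + (\<Sum>m\<in>UNIV. u m * g (bvec m))"
    by (simp only: coord_linearD[OF f, of u] coord_linearD[OF g, of u])
  then show "f u + g u = (\<Sum>m\<in>UNIV. u m * (f (bvec m) + g (bvec m)))"
    by (simp add: distrib_left sum.distrib)
qed

lemma coord_linear_uminus:
  assumes f: "coord_linear f"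
  shows "coord_linear (\<lambda>u. - f u)"
  unfolding coord_linear_def
proof
  fix u
  have "- f u = - (\<Sum>m\<in>UNIV. u m * f (bvec m))"
    by (simp only: coord_linearD[OF f, of u])
  then show "- f u = (\<Sum>m\<in>UNIV. u m * - f (bvec m))"
    by (simp add: sum_negf)
qed

lemma bprod_basis_left: "bprod c (bvec m) y k = (\<Sum>j\<in>UNIV. y j * c m j k)"
  unfolding bprod_def by (subst sum.swap) (simp add: mult.assoc)

lemma bprod_basis_right: "bprod c x (bvec m) k = (\<Sum>i\<in>UNIV. x i * c i m k)"
  unfolding bprod_def by (simp add: mult.assoc sum_distrib_left[symmetric])

lemma bprod_basis: "bprod c (bvec i) (bvec j) k = c i j k"
  by (simp add: bprod_basis_left)

lemma coord_linear_bprod_left: "coord_linear (\<lambda>u. bprod c u y k)"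
  unfolding coord_linear_def
  by (simp add: bprod_basis_left) (simp add: bprod_def sum_distrib_left mult.assoc)

lemma coord_linear_bprod_right: "coord_linear (\<lambda>u. bprod c x u k)"
  unfolding coord_linear_def
proof
  fix u
  have "(\<Sum>m\<in>UNIV. u m * bprod c x (bvec m) k) = (\<Sum>m\<in>UNIV. \<Sum>i\<in>UNIV. x i * u m * c i m k)"
    by (simp add: bprod_basis_right sum_distrib_left ac_simps)
  also have "\<dots> = bprod c x u k"
    by (subst sum.swap) (simp add: bprod_def)
  finally show "bprod c x u k = (\<Sum>m\<in>UNIV. u m * bprod c x (bvec m) k)" by simp
qed

lemma coord_linear_aprod_left: "coord_linear (\<lambda>u. aprod cs cp u y k)"
  unfolding aprod_def by (intro coord_linear_add coord_linear_bprod_left)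

lemma coord_linear_aprod_right: "coord_linear (\<lambda>u. aprod cs cp x u k)"
  unfolding aprod_def by (intro coord_linear_add coord_linear_bprod_right)

lemma bprod_add_left: "bprod c (\<lambda>k. x k + y k) z = (\<lambda>k. bprod c x z k + bprod c y z k)"
  by (simp add: bprod_def distrib_left distrib_right sum.distrib)

lemma bprod_add_right: "bprod c x (\<lambda>k. y k + z k) = (\<lambda>k. bprod c x y k + bprod c x z k)"
  by (simp add: bprod_def distrib_left distrib_right sum.distrib)

lemma coord_linear_map_id [simp]: "coord_linear_map (id :: ('i::finite \<Rightarrow> 'k::field) \<Rightarrow> _)"
  by (simp add: coord_linear_map_def coord_linear_eval)

lemma coord_linear_map_Lop [simp]: "coord_linear_map (Lop c x)"
  by (simp add: coord_linear_map_def Lop_def coord_linear_bprod_right)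

lemma coord_linear_map_Rop [simp]: "coord_linear_map (Rop c x)"
  by (simp add: coord_linear_map_def Rop_def coord_linear_bprod_left)

lemma coord_linear_map_Lsum [simp]: "coord_linear_map (Lsum cs cp x)"
  by (simp add: coord_linear_map_def Lsum_def coord_linear_aprod_right)

lemma coord_linear_map_Rsum [simp]: "coord_linear_map (Rsum cs cp x)"
  by (simp add: coord_linear_map_def Rsum_def coord_linear_aprod_left)

lemma coord_linear_map_comp [simp]:
  assumes f: "coord_linear_map f" and g: "coord_linear_map g"
  shows "coord_linear_map (f \<circ> g)"
  unfolding coord_linear_map_def coord_linear_def
proof (intro allI)
  fix u a
  have "(f \<circ> g) u a = (\<Sum>m\<in>UNIV. (\<Sum>n\<in>UNIV. u n * g (bvec n) m) * f (bvec m) a)"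
    unfolding comp_def by (subst coord_linear_mapD[OF f], subst coord_linear_mapD[OF g]) (rule refl)
  also have "\<dots> = (\<Sum>n\<in>UNIV. u n * (\<Sum>m\<in>UNIV. g (bvec n) m * f (bvec m) a))"
    by (simp add: sum_distrib_left sum_distrib_right mult.assoc) (rule sum.swap)
  also have "\<dots> = (\<Sum>n\<in>UNIV. u n * (f \<circ> g) (bvec n) a)"
    unfolding comp_def by (subst coord_linear_mapD[OF f, of "g (bvec _)" a]) (rule refl)
  finally show "(f \<circ> g) u a = (\<Sum>m\<in>UNIV. u m * (f \<circ> g) (bvec m) a)" .
qed

lemma tmap_apply: "tmap f g t a b = (\<Sum>p\<in>UNIV. \<Sum>q\<in>UNIV. t p q * (f (bvec p) a * g (bvec q) b))"
  by (simp add: tmap_def tens2_def)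

lemma tmap_id_left: "tmap id g t i j = (\<Sum>q\<in>UNIV. t i q * g (bvec q) j)"
proof -
  have "tmap id g t i j = (\<Sum>q\<in>UNIV. \<Sum>p\<in>UNIV. bvec p i * (t p q * g (bvec q) j))"
    unfolding tmap_apply by (subst sum.swap) (simp add: ac_simps)
  then show ?thesis by simp
qed

lemma tmap_id_right: "tmap f id t i j = (\<Sum>p\<in>UNIV. t p j * f (bvec p) i)"
proof -
  have "tmap f id t i j = (\<Sum>p\<in>UNIV. \<Sum>q\<in>UNIV. bvec q j * (t p q * f (bvec p) i))"
    unfolding tmap_apply by (simp add: ac_simps)
  then show ?thesis by simp
qed

lemma scaled_sum_product:
  "(c::'k::field) * ((\<Sum>m\<in>A. f m) * (\<Sum>n\<in>B. g n)) = (\<Sum>m\<in>A. \<Sum>n\<in>B. c * (f m * g n))"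
  by (subst sum_product) (simp only: sum_distrib_left)

lemma tmap_comp:
  assumes f: "coord_linear_map f" and g: "coord_linear_map g"
  shows "tmap f g (tmap f' g' t) = tmap (f \<circ> f') (g \<circ> g') t"
proof (intro ext)
  fix a b
  have "tmap f g (tmap f' g' t) a b =
    (\<Sum>m\<in>UNIV. \<Sum>n\<in>UNIV. \<Sum>p\<in>UNIV. \<Sum>q\<in>UNIV.
       t p q * ((f' (bvec p) m * f (bvec m) a) * (g' (bvec q) n * g (bvec n) b)))"
    unfolding tmap_apply by (simp add: sum_distrib_left sum_distrib_right ac_simps)
  also have "\<dots> = (\<Sum>p\<in>UNIV. \<Sum>q\<in>UNIV. \<Sum>m\<in>UNIV. \<Sum>n\<in>UNIV.
       t p q * ((f' (bvec p) m * f (bvec m) a) * (g' (bvec q) n * g (bvec n) b)))"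
    by (rule sum_swap_pairs)
  also have "\<dots> = (\<Sum>p\<in>UNIV. \<Sum>q\<in>UNIV. t p q *
       ((\<Sum>m\<in>UNIV. f' (bvec p) m * f (bvec m) a) * (\<Sum>n\<in>UNIV. g' (bvec q) n * g (bvec n) b)))"
    by (simp only: scaled_sum_product)
  also have "\<dots> = tmap (f \<circ> f') (g \<circ> g') t a b"
    by (simp add: tmap_apply coord_linear_mapD[OF f, of "f' _"] coord_linear_mapD[OF g, of "g' _"])
  finally show "tmap f g (tmap f' g' t) a b = tmap (f \<circ> f') (g \<circ> g') t a b" .
qed

lemma tmap_sub: "tmap f g (t2sub s t) = t2sub (tmap f g s) (tmap f g t)"
  by (simp add: tmap_apply t2sub_def fun_eq_iff left_diff_distrib sum_subtractf)

lemma tmap_add: "tmap f g (t2add s t) = t2add (tmap f g s) (tmap f g t)"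
  by (simp add: tmap_apply t2add_def fun_eq_iff distrib_right sum.distrib)

lemma tmap_add_pointwise: "tmap f g (\<lambda>a b. s a b + t a b) a b = tmap f g s a b + tmap f g t a b"
  using tmap_add[of f g s t] by (simp add: t2add_def fun_eq_iff)

lemma tmap_neg: "tmap f g (\<lambda>a b. - t a b) = (\<lambda>a b. - tmap f g t a b)"
  by (simp add: tmap_apply fun_eq_iff sum_negf)

lemma tmap_add_left_map: "tmap (\<lambda>u k. f1 u k + f2 u k) g t = t2add (tmap f1 g t) (tmap f2 g t)"
  by (simp add: tmap_apply t2add_def fun_eq_iff distrib_left distrib_right sum.distrib)

lemma tmap_add_right_map: "tmap f (\<lambda>u k. g1 u k + g2 u k) t = t2add (tmap f g1 t) (tmap f g2 t)"
  by (simp add: tmap_apply t2add_def fun_eq_iff distrib_left distrib_right sum.distrib)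

lemma coord_linear_tmap_right:
  assumes "\<And>w c. coord_linear (\<lambda>x. G x w c)"
  shows "coord_linear (\<lambda>x. tmap f (G x) t a b)"
  unfolding coord_linear_def
proof
  fix x
  have "tmap f (G x) t a b =
    (\<Sum>p\<in>UNIV. \<Sum>q\<in>UNIV. \<Sum>m\<in>UNIV. x m * (t p q * (f (bvec p) a * G (bvec m) (bvec q) b)))"
    unfolding tmap_apply by (subst coord_linearD[OF assms]) (simp add: sum_distrib_left ac_simps)
  also have "\<dots> = (\<Sum>m\<in>UNIV. x m * tmap f (G (bvec m)) t a b)"
    unfolding tmap_apply by (subst sum_rotate3) (simp add: sum_distrib_left)
  finally show "tmap f (G x) t a b = (\<Sum>m\<in>UNIV. x m * tmap f (G (bvec m)) t a b)" .
qed

lemma coord_linear_tmap_left: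
  assumes "\<And>w c. coord_linear (\<lambda>x. F x w c)"
  shows "coord_linear (\<lambda>x. tmap (F x) g t a b)"
  unfolding coord_linear_def
proof
  fix x
  have "tmap (F x) g t a b =
    (\<Sum>p\<in>UNIV. \<Sum>q\<in>UNIV. \<Sum>m\<in>UNIV. x m * (t p q * (F (bvec m) (bvec p) a * g (bvec q) b)))"
    unfolding tmap_apply
    by (subst coord_linearD[OF assms]) (simp add: sum_distrib_left sum_distrib_right ac_simps)
  also have "\<dots> = (\<Sum>m\<in>UNIV. x m * tmap (F (bvec m)) g t a b)"
    unfolding tmap_apply by (subst sum_rotate3) (simp add: sum_distrib_left)
  finally show "tmap (F x) g t a b = (\<Sum>m\<in>UNIV. x m * tmap (F (bvec m)) g t a b)" .
qed

lemma flip_sub: "flip (t2sub s t) = t2sub (flip s) (flip t)"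
  by (simp add: flip_def t2sub_def)

lemma flip_neg: "flip (\<lambda>a b. - t a b) = (\<lambda>a b. - flip t a b)"
  by (simp add: flip_def)

lemma tsymD: "tsym r \<Longrightarrow> r b a = r a b"
  unfolding tsym_def flip_def by metis

lemma flip_tmap_sym:
  assumes "tsym r"
  shows "flip (tmap f g r) = tmap g f r"
proof (intro ext)
  fix a b
  have "flip (tmap f g r) a b = (\<Sum>q\<in>UNIV. \<Sum>p\<in>UNIV. r p q * (f (bvec p) b * g (bvec q) a))"
    unfolding flip_def tmap_apply by (rule sum.swap)
  also have "\<dots> = tmap g f r a b"
    unfolding tmap_apply by (simp add: tsymD[OF assms] mult.commute)
  finally show "flip (tmap f g r) a b = tmap g f r a b" .
qed

section \<open>The coproducts defined by r\<close>

lemma coord_linear_Delta_prec: "coord_linear (\<lambda>x. Delta_prec_r cs cp r x a b)"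
  unfolding Delta_prec_r_def t2sub_def
  by (intro coord_linear_diff coord_linear_tmap_right coord_linear_tmap_left)
    (simp_all add: Lop_def Rsum_def coord_linear_bprod_left coord_linear_aprod_right)

lemma coord_linear_Delta_succ: "coord_linear (\<lambda>x. Delta_succ_r cs cp r x a b)"
  unfolding Delta_succ_r_def t2sub_def
  by (intro coord_linear_uminus coord_linear_diff coord_linear_tmap_right coord_linear_tmap_left)
    (simp_all add: Lsum_def Rop_def coord_linear_aprod_left coord_linear_bprod_right)

lemma cobr_apply: "cobr d x i j = (\<Sum>v\<in>UNIV. x v * d i j v)"
  by (simp add: cobr_def pair_def bprod_basis)

lemma cobr_basis: "cobr d (bvec k) i j = d i j k"
  by (simp add: cobr_apply)

lemma cobr_dual_prec: "cobr (dual_prec cs cp r) x = Delta_prec_r cs cp r x"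
  by (simp add: fun_eq_iff cobr_apply dual_prec_def coord_linearD[OF coord_linear_Delta_prec, where u=x])

lemma cobr_dual_succ: "cobr (dual_succ cs cp r) x = Delta_succ_r cs cp r x"
  by (simp add: fun_eq_iff cobr_apply dual_succ_def coord_linearD[OF coord_linear_Delta_succ, where u=x])

lemma cobr_aprod:
  "cobr c (aprod d1 d2 a b) i j = cobr c (bprod d1 a b) i j + cobr c (bprod d2 a b) i j"
  by (simp add: cobr_def pair_def aprod_def distrib_right sum.distrib)

text \<open>Conditions (3),(4),(6) concern the coproducts cobr c of
  A* (dual to the products c of A) and products d of A*.  Evaluated at a \<otimes> b, each
  such expression becomes the pairing of a \<otimes> b with an expression in the coproducts
  cobr d of A, at the basis vectors of A.\<close>
lemma transpose_cobr_bprod: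
  "cobr c (bprod d a b) i j =
   (\<Sum>u\<in>UNIV. \<Sum>v\<in>UNIV. a u * b v * cobr d (bprod c (bvec i) (bvec j)) u v)"
proof -
  have "cobr c (bprod d a b) i j =
    (\<Sum>k\<in>UNIV. \<Sum>u\<in>UNIV. \<Sum>v\<in>UNIV. a u * b v * (d u v k * c i j k))"
    by (simp add: cobr_apply bprod_def sum_distrib_left sum_distrib_right ac_simps)
  also have "\<dots> = (\<Sum>u\<in>UNIV. \<Sum>v\<in>UNIV. \<Sum>k\<in>UNIV. a u * b v * (d u v k * c i j k))"
    by (rule sum_rotate3[symmetric])
  also have "\<dots> = (\<Sum>u\<in>UNIV. \<Sum>v\<in>UNIV. a u * b v * cobr d (bprod c (bvec i) (bvec j)) u v)"
    by (simp add: cobr_apply bprod_basis sum_distrib_left ac_simps)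
  finally show ?thesis .
qed

lemma transpose_id_Lop:
  "tmap id (Lop d a) (cobr c b) i j =
   (\<Sum>u\<in>UNIV. \<Sum>v\<in>UNIV. a u * b v * tmap id (Lop c (bvec i)) (cobr d (bvec j)) u v)"
proof -
  have "tmap id (Lop d a) (cobr c b) i j =
    (\<Sum>q\<in>UNIV. \<Sum>v\<in>UNIV. \<Sum>u\<in>UNIV. a u * b v * (d u q j * c i q v))"
    by (simp add: tmap_id_left cobr_apply Lop_def bprod_basis_right sum_distrib_left
        sum_distrib_right ac_simps)
  also have "\<dots> = (\<Sum>u\<in>UNIV. \<Sum>v\<in>UNIV. \<Sum>q\<in>UNIV. a u * b v * (d u q j * c i q v))"
    by (rule sum_reverse3)
  also have "\<dots> = (\<Sum>u\<in>UNIV. \<Sum>v\<in>UNIV. a u * b v * tmap id (Lop c (bvec i)) (cobr d (bvec j)) u v)"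
    by (simp add: tmap_id_left cobr_basis Lop_def bprod_basis sum_distrib_left ac_simps)
  finally show ?thesis .
qed

lemma transpose_Rop_id:
  "tmap (Rop d b) id (cobr c a) i j =
   (\<Sum>u\<in>UNIV. \<Sum>v\<in>UNIV. a u * b v * tmap (Rop c (bvec j)) id (cobr d (bvec i)) u v)"
proof -
  have "tmap (Rop d b) id (cobr c a) i j =
    (\<Sum>m\<in>UNIV. \<Sum>v\<in>UNIV. \<Sum>u\<in>UNIV. a u * b v * (d m v i * c m j u))"
    by (simp add: tmap_id_right cobr_apply Rop_def bprod_basis_left sum_distrib_left
        sum_distrib_right ac_simps)
  also have "\<dots> = (\<Sum>u\<in>UNIV. \<Sum>v\<in>UNIV. \<Sum>m\<in>UNIV. a u * b v * (d m v i * c m j u))"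
    by (rule sum_reverse3)
  also have "\<dots> = (\<Sum>u\<in>UNIV. \<Sum>v\<in>UNIV. a u * b v * tmap (Rop c (bvec j)) id (cobr d (bvec i)) u v)"
    by (simp add: tmap_id_right cobr_basis Rop_def bprod_basis sum_distrib_left ac_simps)
  finally show ?thesis .
qed

lemma transpose_Lop_id:
  "tmap (Lop d a) id (cobr c b) i j =
   (\<Sum>u\<in>UNIV. \<Sum>v\<in>UNIV. a u * b v * tmap id (Rop c (bvec j)) (cobr d (bvec i)) u v)"
proof -
  have "tmap (Lop d a) id (cobr c b) i j =
    (\<Sum>m\<in>UNIV. \<Sum>v\<in>UNIV. \<Sum>u\<in>UNIV. a u * b v * (d u m i * c m j v))"
    by (simp add: tmap_id_right cobr_apply Lop_def bprod_basis_right sum_distrib_left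
        sum_distrib_right ac_simps)
  also have "\<dots> = (\<Sum>u\<in>UNIV. \<Sum>v\<in>UNIV. \<Sum>m\<in>UNIV. a u * b v * (d u m i * c m j v))"
    by (rule sum_reverse3)
  also have "\<dots> = (\<Sum>u\<in>UNIV. \<Sum>v\<in>UNIV. a u * b v * tmap id (Rop c (bvec j)) (cobr d (bvec i)) u v)"
    by (simp add: tmap_id_left cobr_basis Rop_def bprod_basis sum_distrib_left ac_simps)
  finally show ?thesis .
qed

lemma transpose_id_Rop:
  "tmap id (Rop d a) (cobr c b) i j =
   (\<Sum>u\<in>UNIV. \<Sum>v\<in>UNIV. a u * b v * tmap (Lop c (bvec i)) id (cobr d (bvec j)) v u)"
proof -
  have "tmap id (Rop d a) (cobr c b) i j =
    (\<Sum>m\<in>UNIV. \<Sum>v\<in>UNIV. \<Sum>u\<in>UNIV. a u * b v * (d m u j * c i m v))"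
    by (simp add: tmap_id_left cobr_apply Rop_def bprod_basis_left sum_distrib_left
        sum_distrib_right ac_simps)
  also have "\<dots> = (\<Sum>u\<in>UNIV. \<Sum>v\<in>UNIV. \<Sum>m\<in>UNIV. a u * b v * (d m u j * c i m v))"
    by (rule sum_reverse3)
  also have "\<dots> = (\<Sum>u\<in>UNIV. \<Sum>v\<in>UNIV. a u * b v * tmap (Lop c (bvec i)) id (cobr d (bvec j)) v u)"
    by (simp add: tmap_id_right cobr_basis Lop_def bprod_basis sum_distrib_left ac_simps)
  finally show ?thesis .
qed

lemma pairing_add:
  "(\<Sum>u\<in>A. \<Sum>v\<in>B. a u * b v * X u v) + (\<Sum>u\<in>A. \<Sum>v\<in>B. a u * b v * Y u v) =
   (\<Sum>u\<in>A. \<Sum>v\<in>B. a u * b v * (X u v + Y u v :: 'k::field))"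
  by (simp add: sum.distrib distrib_left)

lemma pairing_diff:
  "(\<Sum>u\<in>A. \<Sum>v\<in>B. a u * b v * X u v) - (\<Sum>u\<in>A. \<Sum>v\<in>B. a u * b v * Y u v) =
   (\<Sum>u\<in>A. \<Sum>v\<in>B. a u * b v * (X u v - Y u v :: 'k::field))"
  by (simp add: sum_subtractf right_diff_distrib)

lemma pairing_swap:
  "(\<Sum>u\<in>UNIV. \<Sum>v\<in>UNIV. b u * a v * X u v) = (\<Sum>u\<in>UNIV. \<Sum>v\<in>UNIV. a u * b v * X v u :: 'k::field)"
  by (subst sum.swap) (simp add: ac_simps)

lemma transpose_Lop_id_swapped:
  "tmap (Lop d b) id (cobr c a) j i =
   (\<Sum>u\<in>UNIV. \<Sum>v\<in>UNIV. a u * b v * tmap id (Rop c (bvec i)) (cobr d (bvec j)) v u)"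
  by (subst transpose_Lop_id) (rule pairing_swap)

lemma transpose_id_Rop_swapped:
  "tmap id (Rop d b) (cobr c a) j i =
   (\<Sum>u\<in>UNIV. \<Sum>v\<in>UNIV. a u * b v * tmap (Lop c (bvec j)) id (cobr d (bvec i)) u v)"
  by (subst transpose_id_Rop) (rule pairing_swap)

text \<open>The total coproduct Delta_succ + Delta_prec = -(id \<otimes> L_prec(x)) r - (R_succ(x) \<otimes> id) r:
  the mixed terms cancel.  This is the form in which the D-bialgebra conditions on
  the A*-side become identities on A.\<close>
lemma Lsum_split: "Lsum cs cp x = (\<lambda>w k. Lop cs x w k + Lop cp x w k)"
  by (simp add: Lsum_def Lop_def aprod_def)

lemma Rsum_split: "Rsum cs cp x = (\<lambda>w k. Rop cs x w k + Rop cp x w k)"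
  by (simp add: Rsum_def Rop_def aprod_def)

lemma Delta_total:
  "(\<lambda>a b. Delta_succ_r cs cp r x a b + Delta_prec_r cs cp r x a b) =
   t2sub (\<lambda>a b. - tmap id (Lop cp x) r a b) (tmap (Rop cs x) id r)"
  unfolding Delta_succ_r_def Delta_prec_r_def Lsum_split Rsum_split
    tmap_add_left_map tmap_add_right_map
  by (simp add: fun_eq_iff t2sub_def t2add_def)

lemma tmap_Delta_total:
  "tmap f g (Delta_succ_r cs cp r x) u v + tmap f g (Delta_prec_r cs cp r x) u v =
   tmap f g (t2sub (\<lambda>a b. - tmap id (Lop cp x) r a b) (tmap (Rop cs x) id r)) u v"
  by (simp only: tmap_add_pointwise[symmetric] Delta_total)

section \<open>The compatibility conditions (1)--(6)\<close>

context
  fixes cs cp :: "'i::finite \<Rightarrow> 'i \<Rightarrow> 'i \<Rightarrow> 'k::field" and r :: "'i \<Rightarrow> 'i \<Rightarrow> 'k"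
  assumes dend: "dendriform cs cp"
begin

abbreviation ds where "ds \<equiv> dual_succ cs cp r"
abbreviation dp where "dp \<equiv> dual_prec cs cp r"

lemma dend_prec_prec: "bprod cp (bprod cp x y) z = bprod cp x (aprod cs cp y z)"
  using dend by (simp add: dendriform_def)

lemma dend_succ_prec: "bprod cp (bprod cs x y) z = bprod cs x (bprod cp y z)"
  using dend by (simp add: dendriform_def)

lemma dend_succ_succ: "bprod cs x (bprod cs y z) = bprod cs (aprod cs cp x y) z"
  using dend by (simp add: dendriform_def)

lemma aprod_assoc: "aprod cs cp (aprod cs cp x y) z = aprod cs cp x (aprod cs cp y z)"
proof (rule ext)
  fix k
  have "bprod cp (aprod cs cp x y) z k = bprod cp (bprod cs x y) z k + bprod cp (bprod cp x y) z k"
    by (simp add: aprod_def[of cs cp x y] bprod_add_left)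
  then have "aprod cs cp (aprod cs cp x y) z k =
     bprod cs (aprod cs cp x y) z k + bprod cp (bprod cs x y) z k + bprod cp (bprod cp x y) z k"
    unfolding aprod_def[of cs cp "aprod cs cp x y" z] by simp
  also have "\<dots> = bprod cs x (bprod cs y z) k + bprod cs x (bprod cp y z) k
      + bprod cp x (aprod cs cp y z) k"
    by (simp add: dend_prec_prec dend_succ_prec dend_succ_succ)
  also have "\<dots> = aprod cs cp x (aprod cs cp y z) k"
    by (simp add: aprod_def[of cs cp x] aprod_def[of cs cp y z] bprod_add_right)
  finally show "aprod cs cp (aprod cs cp x y) z k = aprod cs cp x (aprod cs cp y z) k" .
qed

lemma L_succ_aprod: "Lop cs (aprod cs cp x y) = Lop cs x \<circ> Lop cs y"
  by (simp add: fun_eq_iff Lop_def dend_succ_succ)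

lemma L_aprod: "Lsum cs cp (aprod cs cp x y) = Lsum cs cp x \<circ> Lsum cs cp y"
  by (simp add: fun_eq_iff Lsum_def aprod_assoc)

lemma R_prec_aprod: "Rop cp (aprod cs cp x y) = Rop cp y \<circ> Rop cp x"
  by (simp add: fun_eq_iff Rop_def dend_prec_prec)

lemma R_aprod: "Rsum cs cp (aprod cs cp x y) = Rsum cs cp y \<circ> Rsum cs cp x"
  by (simp add: fun_eq_iff Rsum_def aprod_assoc)

lemma R_L_commute: "Rsum cs cp y \<circ> Lsum cs cp x = Lsum cs cp x \<circ> Rsum cs cp y"
  by (simp add: fun_eq_iff Rsum_def Lsum_def aprod_assoc)

lemma L_succ_R_prec_commute: "Lop cs y \<circ> Rop cp x = Rop cp x \<circ> Lop cs y"
  by (simp add: fun_eq_iff Rop_def Lop_def dend_succ_prec)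

lemma L_prec_prec: "Lop cp (bprod cp x y) = Lop cp x \<circ> Lsum cs cp y"
  by (simp add: fun_eq_iff Lop_def Lsum_def dend_prec_prec)

lemma R_succ_prec: "Rop cs (bprod cp x y) = Rop cp y \<circ> Rop cs x"
  by (simp add: fun_eq_iff Rop_def dend_succ_prec)

lemma L_prec_succ: "Lop cp (bprod cs x y) = Lop cs x \<circ> Lop cp y"
  by (simp add: fun_eq_iff Lop_def dend_succ_prec)

lemma R_succ_succ: "Rop cs (bprod cs x y) = Rop cs y \<circ> Rsum cs cp x"
  by (simp add: fun_eq_iff Rop_def Rsum_def dend_succ_succ)

lemma R_prec_L_prec: "Rop cp y \<circ> Lop cp x = Lop cp x \<circ> Rsum cs cp y"
  by (simp add: fun_eq_iff Rop_def Lop_def Rsum_def dend_prec_prec)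

lemma R_succ_L: "Rop cs x \<circ> Lsum cs cp y = Lop cs y \<circ> Rop cs x"
  by (simp add: fun_eq_iff Rop_def Lop_def Lsum_def dend_succ_succ)

text \<open>Conditions (1), (2): multiplicativity of Delta_prec and Delta_succ.  Since
  Delta is built from the representations, this is functoriality of \<otimes>.\<close>
lemma condition1:
  "cobr dp (aprod cs cp x y) =
   t2add (tmap id (Lop cs x) (cobr dp y)) (tmap (Rsum cs cp y) id (cobr dp x))"
  unfolding cobr_dual_prec Delta_prec_r_def tmap_sub
  by (simp add: tmap_comp L_succ_aprod R_aprod fun_eq_iff t2add_def t2sub_def)

lemma condition2:
  "cobr ds (aprod cs cp x y) =
   t2add (tmap id (Lsum cs cp x) (cobr ds y)) (tmap (Rop cp y) id (cobr ds x))"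
  unfolding cobr_dual_succ Delta_succ_r_def tmap_neg tmap_sub
  by (simp add: tmap_comp L_aprod R_prec_aprod fun_eq_iff t2add_def t2sub_def)

text \<open>Condition (5): with \<sigma>(r) = r the flipped terms match the others via the
  commutation relations of the representations.\<close>
lemma condition5:
  assumes sym: "tsym r"
  shows "t2add (t2sub (tmap (Lsum cs cp x) id (cobr dp y)) (tmap id (Rop cp x) (cobr dp y)))
           (flip (t2sub (tmap (Lop cs y) id (cobr ds x)) (tmap id (Rsum cs cp y) (cobr ds x))))
         = (\<lambda>a b. 0)"
  unfolding cobr_dual_succ Delta_succ_r_def cobr_dual_prec Delta_prec_r_def
    tmap_neg tmap_sub flip_sub flip_neg
  by (simp add: tmap_comp flip_tmap_sym[OF sym] flip_sub flip_neg R_L_commute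
      L_succ_R_prec_commute fun_eq_iff t2add_def t2sub_def)

text \<open>Identities for the total coproduct Delta = Delta_succ + Delta_prec on products:
  the transposes of conditions (3), (4) and (6).\<close>
lemma Delta_total_prec_product:
  "Delta_succ_r cs cp r (bprod cp x y) u v + Delta_prec_r cs cp r (bprod cp x y) u v =
   tmap id (Lop cp x) (Delta_succ_r cs cp r y) u v +
   (tmap (Rop cp y) id (Delta_succ_r cs cp r x) u v + tmap (Rop cp y) id (Delta_prec_r cs cp r x) u v)"
  unfolding tmap_Delta_total fun_cong[OF fun_cong[OF Delta_total]]
  by (simp only: Delta_succ_r_def tmap_neg tmap_sub)
    (simp add: tmap_comp L_prec_prec R_succ_prec t2sub_def)

lemma Delta_total_succ_product:
  "Delta_succ_r cs cp r (bprod cs x y) u v + Delta_prec_r cs cp r (bprod cs x y) u v =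
   (tmap id (Lop cs x) (Delta_succ_r cs cp r y) u v + tmap id (Lop cs x) (Delta_prec_r cs cp r y) u v) +
   tmap (Rop cs y) id (Delta_prec_r cs cp r x) u v"
  unfolding tmap_Delta_total fun_cong[OF fun_cong[OF Delta_total]]
  by (simp only: Delta_prec_r_def tmap_neg tmap_sub)
    (simp add: tmap_comp L_prec_succ R_succ_succ t2sub_def)

lemma Delta_total_mixed:
  assumes sym: "tsym r"
  shows "(tmap id (Rop cp y) (Delta_succ_r cs cp r x) u v + tmap id (Rop cp y) (Delta_prec_r cs cp r x) u v)
     - tmap (Lop cp x) id (Delta_prec_r cs cp r y) v u
     + (tmap id (Rop cs x) (Delta_succ_r cs cp r y) v u
     - (tmap (Lop cs y) id (Delta_succ_r cs cp r x) u v + tmap (Lop cs y) id (Delta_prec_r cs cp r x) u v)) = 0"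
proof -
  have flipped: "tmap f g t v u = flip (tmap f g t) u v" for f g t
    by (simp add: flip_def)
  show ?thesis
    unfolding tmap_Delta_total flipped
    unfolding Delta_succ_r_def Delta_prec_r_def tmap_neg tmap_sub
    by (simp add: tmap_comp, simp only: flip_tmap_sym[OF sym] flip_sub flip_neg,
        simp add: R_prec_L_prec R_succ_L t2sub_def)
qed

lemma condition3:
  "cobr cp (aprod ds dp a b) =
   t2add (tmap id (Lop ds a) (cobr cp b)) (tmap (Rsum ds dp b) id (cobr cp a))"
  (is "?lhs = ?rhs")
proof (intro ext)
  fix i j
  have "?lhs i j = (\<Sum>u\<in>UNIV. \<Sum>v\<in>UNIV. a u * b v *
      (Delta_succ_r cs cp r (bprod cp (bvec i) (bvec j)) u v
       + Delta_prec_r cs cp r (bprod cp (bvec i) (bvec j)) u v))"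
    by (simp only: cobr_aprod transpose_cobr_bprod cobr_dual_succ cobr_dual_prec pairing_add)
  also have "\<dots> = ?rhs i j"
    by (simp only: Delta_total_prec_product t2add_def Rsum_split tmap_add_left_map
        transpose_id_Lop transpose_Rop_id cobr_dual_succ cobr_dual_prec pairing_add)
  finally show "?lhs i j = ?rhs i j" .
qed

lemma condition4:
  "cobr cs (aprod ds dp a b) =
   t2add (tmap id (Lsum ds dp a) (cobr cs b)) (tmap (Rop dp b) id (cobr cs a))"
  (is "?lhs = ?rhs")
proof (intro ext)
  fix i j
  have "?lhs i j = (\<Sum>u\<in>UNIV. \<Sum>v\<in>UNIV. a u * b v *
      (Delta_succ_r cs cp r (bprod cs (bvec i) (bvec j)) u v
       + Delta_prec_r cs cp r (bprod cs (bvec i) (bvec j)) u v))"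
    by (simp only: cobr_aprod transpose_cobr_bprod cobr_dual_succ cobr_dual_prec pairing_add)
  also have "\<dots> = ?rhs i j"
    by (simp only: Delta_total_succ_product t2add_def Lsum_split tmap_add_right_map
        transpose_id_Lop transpose_Rop_id cobr_dual_succ cobr_dual_prec pairing_add)
  finally show "?lhs i j = ?rhs i j" .
qed

lemma condition6:
  assumes sym: "tsym r"
  shows "t2add (t2sub (tmap (Lsum ds dp a) id (cobr cp b)) (tmap id (Rop dp a) (cobr cp b)))
           (flip (t2sub (tmap (Lop ds b) id (cobr cs a)) (tmap id (Rsum ds dp b) (cobr cs a))))
         = (\<lambda>a b. 0)"
  (is "?lhs = _")
proof (intro ext)
  fix i j
  have "?lhs i j = (\<Sum>u\<in>UNIV. \<Sum>v\<in>UNIV. a u * b v *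
      ((tmap id (Rop cp (bvec j)) (Delta_succ_r cs cp r (bvec i)) u v
        + tmap id (Rop cp (bvec j)) (Delta_prec_r cs cp r (bvec i)) u v)
       - tmap (Lop cp (bvec i)) id (Delta_prec_r cs cp r (bvec j)) v u
       + (tmap id (Rop cs (bvec i)) (Delta_succ_r cs cp r (bvec j)) v u
       - (tmap (Lop cs (bvec j)) id (Delta_succ_r cs cp r (bvec i)) u v
          + tmap (Lop cs (bvec j)) id (Delta_prec_r cs cp r (bvec i)) u v))))"
    by (simp only: t2add_def t2sub_def flip_def Lsum_split Rsum_split tmap_add_left_map
        tmap_add_right_map transpose_Lop_id[where c=cp] transpose_id_Rop[where c=cp]
        transpose_Lop_id_swapped[where c=cs] transpose_id_Rop_swapped[where c=cs]
        cobr_dual_succ cobr_dual_prec pairing_add pairing_diff)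
  then show "?lhs i j = 0"
    by (simp only: Delta_total_mixed[OF sym]) simp
qed

end

section \<open>The dual products are dendriform\<close>

definition rr_sum :: "('i::finite \<Rightarrow> 'i \<Rightarrow> 'k::field) \<Rightarrow> ('i \<Rightarrow> 'i \<Rightarrow> 'i \<Rightarrow> 'i \<Rightarrow> 'k) \<Rightarrow> 'k" where
  "rr_sum r F = (\<Sum>p\<in>UNIV. \<Sum>q\<in>UNIV. \<Sum>s\<in>UNIV. \<Sum>t\<in>UNIV. r p q * r s t * F p q s t)"

lemma rr_sum_add: "rr_sum r (\<lambda>p q s t. F p q s t + G p q s t) = rr_sum r F + rr_sum r G"
  by (simp add: rr_sum_def distrib_left sum.distrib)

lemma rr_sum_diff: "rr_sum r (\<lambda>p q s t. F p q s t - G p q s t) = rr_sum r F - rr_sum r G"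
  by (simp add: rr_sum_def right_diff_distrib sum_subtractf)

lemma rr_sum_cmult: "rr_sum r (\<lambda>p q s t. c * F p q s t) = c * rr_sum r F"
  by (simp add: rr_sum_def sum_distrib_left ac_simps)

lemma rr_sum_cong: "(\<And>p q s t. F p q s t = G p q s t) \<Longrightarrow> rr_sum r F = rr_sum r G"
  by (simp add: rr_sum_def)

lemma rr_sum_sum: "rr_sum r (\<lambda>p q s t. \<Sum>a\<in>A. F a p q s t) = (\<Sum>a\<in>A. rr_sum r (F a))"
proof -
  have "rr_sum r (\<lambda>p q s t. \<Sum>a\<in>A. F a p q s t) =
    (\<Sum>p\<in>UNIV. \<Sum>q\<in>UNIV. \<Sum>s\<in>UNIV. \<Sum>t\<in>UNIV. \<Sum>a\<in>A. r p q * r s t * F a p q s t)"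
    by (simp add: rr_sum_def sum_distrib_left)
  also have "\<dots> = (\<Sum>p\<in>UNIV. \<Sum>q\<in>UNIV. \<Sum>a\<in>A. \<Sum>s\<in>UNIV. \<Sum>t\<in>UNIV. r p q * r s t * F a p q s t)"
    by (intro sum.cong refl) (rule sum_rotate3)
  also have "\<dots> = (\<Sum>a\<in>A. \<Sum>p\<in>UNIV. \<Sum>q\<in>UNIV. \<Sum>s\<in>UNIV. \<Sum>t\<in>UNIV. r p q * r s t * F a p q s t)"
    by (rule sum_rotate3)
  finally show ?thesis by (simp add: rr_sum_def)
qed

lemma rr_sum_swap: "rr_sum r F = rr_sum r (\<lambda>p q s t. F s t p q)"
  unfolding rr_sum_def by (subst sum_swap_pairs) (simp add: ac_simps)

lemma rr_sum_flip_first: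
  assumes "tsym r" shows "rr_sum r F = rr_sum r (\<lambda>p q s t. F q p s t)"
  unfolding rr_sum_def by (subst sum.swap) (simp add: tsymD[OF assms])

lemma rr_sum_flip_second:
  assumes "tsym r" shows "rr_sum r F = rr_sum r (\<lambda>p q s t. F p q t s)"
  unfolding rr_sum_def
  by (rule sum.cong[OF refl], rule sum.cong[OF refl], subst sum.swap) (simp add: tsymD[OF assms])

text \<open>Hence for symmetric r a quartic sum does not change when we add antisymmetrised
  terms H - H' where H' is H composed with one of the seven non-trivial symmetries.\<close>
lemma rr_sum_eq_modulo_symmetries:
  assumes sym: "tsym r"
    and eq: "\<And>p q s t. F p q s t = G p q s t
      + (Ha p q s t - Ha q p s t) + (Hb p q s t - Hb p q t s) + (Hc p q s t - Hc q p t s)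
      + (Hd p q s t - Hd s t p q) + (He p q s t - He t s p q) + (Hf p q s t - Hf s t q p)
      + (Hg p q s t - Hg t s q p)"
  shows "rr_sum r F = rr_sum r G"
proof -
  have cancel: "rr_sum r (\<lambda>p q s t. H p q s t - H' p q s t) = 0"
    if "rr_sum r H = rr_sum r H'" for H H' :: "'a \<Rightarrow> 'a \<Rightarrow> 'a \<Rightarrow> 'a \<Rightarrow> 'b"
    using that by (simp add: rr_sum_diff)
  note flip1 = rr_sum_flip_first[OF sym] and flip2 = rr_sum_flip_second[OF sym]
  have "rr_sum r (\<lambda>p q s t. Ha p q s t - Ha q p s t) = 0"
    by (rule cancel, rule flip1)
  moreover have "rr_sum r (\<lambda>p q s t. Hb p q s t - Hb p q t s) = 0"
    by (rule cancel, rule flip2)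
  moreover have "rr_sum r (\<lambda>p q s t. Hc p q s t - Hc q p t s) = 0"
    by (rule cancel, subst flip1, subst flip2, rule refl)
  moreover have "rr_sum r (\<lambda>p q s t. Hd p q s t - Hd s t p q) = 0"
    by (rule cancel, rule rr_sum_swap)
  moreover have "rr_sum r (\<lambda>p q s t. He p q s t - He t s p q) = 0"
    by (rule cancel, subst rr_sum_swap, subst flip1, rule refl)
  moreover have "rr_sum r (\<lambda>p q s t. Hf p q s t - Hf s t q p) = 0"
    by (rule cancel, subst rr_sum_swap, subst flip2, rule refl)
  moreover have "rr_sum r (\<lambda>p q s t. Hg p q s t - Hg t s q p) = 0"
    by (rule cancel, subst rr_sum_swap, subst flip1, subst flip2, rule refl)
  ultimately show ?thesis
    by (simp only: rr_sum_cong[OF eq] rr_sum_add) simp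
qed

lemma rr_sum_eq_by_cancellation:
  assumes "rr_sum r (\<lambda>p q s t. A p q s t - B p q s t) = rr_sum r (\<lambda>p q s t. C p q s t - D p q s t)"
    and "rr_sum r C = 0" and "rr_sum r D = 0"
  shows "rr_sum r A = rr_sum r B"
  using assms by (simp add: rr_sum_diff)

lemma triple_sum_product:
  "(\<Sum>a\<in>A. X a) * (\<Sum>b\<in>B. Y b) * (\<Sum>c\<in>C. Z c) =
   (\<Sum>a\<in>A. \<Sum>b\<in>B. \<Sum>c\<in>C. X a * Y b * (Z c :: 'k::field))"
proof -
  have "(\<Sum>a\<in>A. X a) * (\<Sum>b\<in>B. Y b) = (\<Sum>a\<in>A. \<Sum>b\<in>B. X a * Y b)"
    by (rule sum_product)
  then show ?thesis
    by (simp only: sum_distrib_right) (simp only: sum_distrib_left)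
qed

lemma rr_sum_trilinear:
  assumes f1: "coord_linear f1" and f2: "coord_linear f2" and f3: "coord_linear f3"
  shows "rr_sum r (\<lambda>p q s t. f1 (U p q s t) * f2 (V p q s t) * f3 (W p q s t)) =
    (\<Sum>a\<in>UNIV. \<Sum>b\<in>UNIV. \<Sum>c\<in>UNIV. (f1 (bvec a) * f2 (bvec b) * f3 (bvec c)) *
       rr_sum r (\<lambda>p q s t. U p q s t a * V p q s t b * W p q s t c))"
proof -
  have "f1 (U p q s t) * f2 (V p q s t) * f3 (W p q s t) =
    (\<Sum>a\<in>UNIV. \<Sum>b\<in>UNIV. \<Sum>c\<in>UNIV. (f1 (bvec a) * f2 (bvec b) * f3 (bvec c)) *
       (U p q s t a * V p q s t b * W p q s t c))" for p q s t
    by (subst coord_linearD[OF f1], subst coord_linearD[OF f2], subst coord_linearD[OF f3],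
        subst triple_sum_product) (simp add: ac_simps)
  then have "rr_sum r (\<lambda>p q s t. f1 (U p q s t) * f2 (V p q s t) * f3 (W p q s t)) =
    rr_sum r (\<lambda>p q s t. \<Sum>a\<in>UNIV. \<Sum>b\<in>UNIV. \<Sum>c\<in>UNIV. (f1 (bvec a) * f2 (bvec b) * f3 (bvec c)) *
       (U p q s t a * V p q s t b * W p q s t c))"
    by (rule rr_sum_cong)
  then show ?thesis
    by (simp only: rr_sum_sum rr_sum_cmult)
qed

lemma D_equation_functional:
  assumes Deq: "D_equation cs cp r"
    and f1: "coord_linear f1" and f2: "coord_linear f2" and f3: "coord_linear f3"
  shows "rr_sum r (\<lambda>p q s t. f1 (aprod cs cp (bvec p) (bvec s)) * f2 (bvec q) * f3 (bvec t)
     - f1 (bvec p) * f2 (bvec s) * f3 (bprod cp (bvec q) (bvec t))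
     - f1 (bvec s) * f2 (bprod cs (bvec p) (bvec t)) * f3 (bvec q)) = 0"
proof -
  have coords: "rr_sum r (\<lambda>p q s t. aprod cs cp (bvec p) (bvec s) a * bvec q b * bvec t c) =
      rr_sum r (\<lambda>p q s t. bvec p a * bvec s b * bprod cp (bvec q) (bvec t) c) +
      rr_sum r (\<lambda>p q s t. bvec s a * bprod cs (bvec p) (bvec t) b * bvec q c)" for a b c
  proof -
    have "r12_star_r13 cs cp r a b c = r13_prec_r23 cp r a b c + r23_succ_r12 cs r a b c"
      using Deq unfolding D_equation_def by metis
    then show ?thesis
      by (simp add: rr_sum_def r12_star_r13_def r13_prec_r23_def r23_succ_r12_def tens3_def)
  qed
  have "rr_sum r (\<lambda>p q s t. f1 (aprod cs cp (bvec p) (bvec s)) * f2 (bvec q) * f3 (bvec t)) =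
    rr_sum r (\<lambda>p q s t. f1 (bvec p) * f2 (bvec s) * f3 (bprod cp (bvec q) (bvec t))) +
    rr_sum r (\<lambda>p q s t. f1 (bvec s) * f2 (bprod cs (bvec p) (bvec t)) * f3 (bvec q))"
    by (simp only: rr_sum_trilinear[OF f1 f2 f3] coords distrib_left sum.distrib)
  then show ?thesis by (simp only: rr_sum_diff) simp
qed

lemma Delta_prec_coords:
  "Delta_prec_r cs cp r x a b =
   (\<Sum>p\<in>UNIV. \<Sum>q\<in>UNIV. r p q * (bvec p a * bprod cs x (bvec q) b - aprod cs cp (bvec p) x a * bvec q b))"
  by (simp add: Delta_prec_r_def t2sub_def tmap_apply Lop_def Rsum_def right_diff_distrib
      sum_subtractf ac_simps)

lemma Delta_prec_coords':
  "Delta_prec_r cs cp r x a b =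
   (\<Sum>p\<in>UNIV. \<Sum>q\<in>UNIV. r p q * (bprod cs x (bvec q) b * bvec p a - bvec q b * aprod cs cp (bvec p) x a))"
  by (simp add: Delta_prec_coords ac_simps)

lemma Delta_succ_coords:
  "Delta_succ_r cs cp r x a b =
   (\<Sum>p\<in>UNIV. \<Sum>q\<in>UNIV. r p q * (bprod cp (bvec p) x a * bvec q b - bvec p a * aprod cs cp x (bvec q) b))"
  by (simp add: Delta_succ_r_def t2sub_def tmap_apply Lsum_def Rop_def right_diff_distrib
      sum_subtractf ac_simps)

lemma Delta_succ_coords':
  "Delta_succ_r cs cp r x a b =
   (\<Sum>p\<in>UNIV. \<Sum>q\<in>UNIV. r p q * (bvec q b * bprod cp (bvec p) x a - aprod cs cp x (bvec q) b * bvec p a))"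
  by (simp add: Delta_succ_coords ac_simps)

lemma Delta_total_coords:
  "Delta_succ_r cs cp r x a b + Delta_prec_r cs cp r x a b =
   (\<Sum>p\<in>UNIV. \<Sum>q\<in>UNIV. r p q * (- (bvec p a * bprod cp x (bvec q) b) - bprod cs (bvec p) x a * bvec q b))"
  using fun_cong[OF fun_cong[OF Delta_total[of cs cp r x]], of a b]
  by (simp add: t2sub_def tmap_apply Lop_def Rop_def right_diff_distrib sum_subtractf sum_negf ac_simps)

lemma coord_linear_Delta_total: "coord_linear (\<lambda>x. Delta_succ_r cs cp r x a b + Delta_prec_r cs cp r x a b)"
  by (intro coord_linear_add coord_linear_Delta_succ coord_linear_Delta_prec)

text \<open>Applying a linear map D to the expansion of Delta over r: this turns the
  composites (Delta \<otimes> id) Delta and (id \<otimes> Delta) Delta into quartic sums.\<close>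
lemma linear_apply_expansion:
  assumes lin: "coord_linear (\<lambda>u. D u c d)"
  shows "(\<Sum>m\<in>UNIV. D (bvec m) c d * (\<Sum>p\<in>UNIV. \<Sum>q\<in>UNIV. r p q * (X p q * U p q m - Y p q * U' p q m))) =
    (\<Sum>p\<in>UNIV. \<Sum>q\<in>UNIV. r p q * (X p q * D (U p q) c d - Y p q * D (U' p q) c d))"
proof -
  have "(\<Sum>m\<in>UNIV. D (bvec m) c d * (\<Sum>p\<in>UNIV. \<Sum>q\<in>UNIV. r p q * (X p q * U p q m - Y p q * U' p q m))) =
    (\<Sum>p\<in>UNIV. \<Sum>q\<in>UNIV. \<Sum>m\<in>UNIV. D (bvec m) c d * (r p q * (X p q * U p q m - Y p q * U' p q m)))"
    by (simp add: sum_distrib_left, rule sum_rotate3[symmetric])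
  also have "\<dots> = (\<Sum>p\<in>UNIV. \<Sum>q\<in>UNIV. r p q * (X p q * D (U p q) c d - Y p q * D (U' p q) c d))"
    by (subst (1 2) coord_linearD[OF lin])
      (simp add: sum_distrib_left right_diff_distrib sum_subtractf ac_simps)
  finally show ?thesis .
qed

lemma rr_sum_nested:
  "(\<Sum>p\<in>UNIV. \<Sum>q\<in>UNIV. r p q * (X p q * (\<Sum>s\<in>UNIV. \<Sum>t\<in>UNIV. r s t * A p q s t)
      - Y p q * (\<Sum>s\<in>UNIV. \<Sum>t\<in>UNIV. r s t * B p q s t)))
   = rr_sum r (\<lambda>p q s t. X p q * A p q s t - Y p q * B p q s t)"
  by (simp add: rr_sum_def sum_distrib_left right_diff_distrib sum_subtractf ac_simps)

text \<open>The six composites of coproducts that enter the co-dendriform identities,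
  (Delta_X \<otimes> id) Delta_Y(x) (summing over the first leg of Delta_Y(x)) and
  (id \<otimes> Delta_X) Delta_Y(x) (summing over its second leg), as quartic sums.\<close>
lemma compose_left_prec_prec:
  "(\<Sum>m\<in>UNIV. Delta_prec_r cs cp r (bvec m) i j * Delta_prec_r cs cp r x m l) = rr_sum r (\<lambda>p q s t.
    bprod cs x (bvec q) l * (bvec s i * bprod cs (bvec p) (bvec t) j - aprod cs cp (bvec s) (bvec p) i * bvec t j)
    - bvec q l * (bvec s i * bprod cs (aprod cs cp (bvec p) x) (bvec t) j
                  - aprod cs cp (bvec s) (aprod cs cp (bvec p) x) i * bvec t j))"
  unfolding Delta_prec_coords'[of cs cp r x]
  by (subst linear_apply_expansion[where D="Delta_prec_r cs cp r"], rule coord_linear_Delta_prec)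
    (simp only: Delta_prec_coords rr_sum_nested)

lemma compose_right_total_prec:
  "(\<Sum>m\<in>UNIV. (Delta_succ_r cs cp r (bvec m) j l + Delta_prec_r cs cp r (bvec m) j l)
      * Delta_prec_r cs cp r x i m) = rr_sum r (\<lambda>p q s t.
    bvec p i * (- (bvec s j * bprod cp (bprod cs x (bvec q)) (bvec t) l)
                - bprod cs (bvec s) (bprod cs x (bvec q)) j * bvec t l)
    - aprod cs cp (bvec p) x i * (- (bvec s j * bprod cp (bvec q) (bvec t) l)
                - bprod cs (bvec s) (bvec q) j * bvec t l))"
  unfolding Delta_prec_coords[of cs cp r x]
  by (subst linear_apply_expansion[where D="\<lambda>u a b. Delta_succ_r cs cp r u a b + Delta_prec_r cs cp r u a b"], rule coord_linear_Delta_total)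
    (simp only: Delta_total_coords rr_sum_nested)

lemma compose_left_succ_prec:
  "(\<Sum>m\<in>UNIV. Delta_succ_r cs cp r (bvec m) i j * Delta_prec_r cs cp r x m l) = rr_sum r (\<lambda>p q s t.
    bprod cs x (bvec q) l * (bprod cp (bvec s) (bvec p) i * bvec t j - bvec s i * aprod cs cp (bvec p) (bvec t) j)
    - bvec q l * (bprod cp (bvec s) (aprod cs cp (bvec p) x) i * bvec t j
                  - bvec s i * aprod cs cp (aprod cs cp (bvec p) x) (bvec t) j))"
  unfolding Delta_prec_coords'[of cs cp r x]
  by (subst linear_apply_expansion[where D="Delta_succ_r cs cp r"], rule coord_linear_Delta_succ)
    (simp only: Delta_succ_coords rr_sum_nested)

lemma compose_right_prec_succ:
  "(\<Sum>m\<in>UNIV. Delta_prec_r cs cp r (bvec m) j l * Delta_succ_r cs cp r x i m) = rr_sum r (\<lambda>p q s t.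
    bprod cp (bvec p) x i * (bvec s j * bprod cs (bvec q) (bvec t) l - aprod cs cp (bvec s) (bvec q) j * bvec t l)
    - bvec p i * (bvec s j * bprod cs (aprod cs cp x (bvec q)) (bvec t) l
                  - aprod cs cp (bvec s) (aprod cs cp x (bvec q)) j * bvec t l))"
  unfolding Delta_succ_coords[of cs cp r x]
  by (subst linear_apply_expansion[where D="Delta_prec_r cs cp r"], rule coord_linear_Delta_prec)
    (simp only: Delta_prec_coords rr_sum_nested)

lemma compose_right_succ_succ:
  "(\<Sum>m\<in>UNIV. Delta_succ_r cs cp r (bvec m) j l * Delta_succ_r cs cp r x i m) = rr_sum r (\<lambda>p q s t.
    bprod cp (bvec p) x i * (bprod cp (bvec s) (bvec q) j * bvec t l - bvec s j * aprod cs cp (bvec q) (bvec t) l)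
    - bvec p i * (bprod cp (bvec s) (aprod cs cp x (bvec q)) j * bvec t l
                  - bvec s j * aprod cs cp (aprod cs cp x (bvec q)) (bvec t) l))"
  unfolding Delta_succ_coords[of cs cp r x]
  by (subst linear_apply_expansion[where D="Delta_succ_r cs cp r"], rule coord_linear_Delta_succ)
    (simp only: Delta_succ_coords rr_sum_nested)

lemma compose_left_total_succ:
  "(\<Sum>m\<in>UNIV. (Delta_succ_r cs cp r (bvec m) i j + Delta_prec_r cs cp r (bvec m) i j)
      * Delta_succ_r cs cp r x m l) = rr_sum r (\<lambda>p q s t.
    bvec q l * (- (bvec s i * bprod cp (bprod cp (bvec p) x) (bvec t) j)
                - bprod cs (bvec s) (bprod cp (bvec p) x) i * bvec t j)
    - aprod cs cp x (bvec q) l * (- (bvec s i * bprod cp (bvec p) (bvec t) j)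
                - bprod cs (bvec s) (bvec p) i * bvec t j))"
  unfolding Delta_succ_coords'[of cs cp r x]
  by (subst linear_apply_expansion[where D="\<lambda>u a b. Delta_succ_r cs cp r u a b + Delta_prec_r cs cp r u a b"], rule coord_linear_Delta_total)
    (simp only: Delta_total_coords rr_sum_nested)

lemma bprod_nested_left:
  "bprod d1 (bprod d2 a b) c k =
   (\<Sum>i\<in>UNIV. \<Sum>j\<in>UNIV. \<Sum>l\<in>UNIV. a i * b j * c l * (\<Sum>m\<in>UNIV. d2 i j m * d1 m l k))"
proof -
  have "bprod d1 (bprod d2 a b) c k =
    (\<Sum>m\<in>UNIV. \<Sum>l\<in>UNIV. \<Sum>i\<in>UNIV. \<Sum>j\<in>UNIV. a i * b j * c l * (d2 i j m * d1 m l k))"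
    by (simp add: bprod_def sum_distrib_left sum_distrib_right ac_simps)
  also have "\<dots> = (\<Sum>i\<in>UNIV. \<Sum>j\<in>UNIV. \<Sum>m\<in>UNIV. \<Sum>l\<in>UNIV. a i * b j * c l * (d2 i j m * d1 m l k))"
    by (rule sum_swap_pairs)
  also have "\<dots> = (\<Sum>i\<in>UNIV. \<Sum>j\<in>UNIV. \<Sum>l\<in>UNIV. \<Sum>m\<in>UNIV. a i * b j * c l * (d2 i j m * d1 m l k))"
    by (rule sum.cong[OF refl], rule sum.cong[OF refl], rule sum.swap)
  also have "\<dots> = (\<Sum>i\<in>UNIV. \<Sum>j\<in>UNIV. \<Sum>l\<in>UNIV. a i * b j * c l * (\<Sum>m\<in>UNIV. d2 i j m * d1 m l k))"
    by (simp add: sum_distrib_left)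
  finally show ?thesis .
qed

lemma bprod_nested_right:
  "bprod d1 a (bprod d2 b c) k =
   (\<Sum>i\<in>UNIV. \<Sum>j\<in>UNIV. \<Sum>l\<in>UNIV. a i * b j * c l * (\<Sum>m\<in>UNIV. d2 j l m * d1 i m k))"
proof -
  have "bprod d1 a (bprod d2 b c) k =
    (\<Sum>i\<in>UNIV. \<Sum>m\<in>UNIV. \<Sum>j\<in>UNIV. \<Sum>l\<in>UNIV. a i * b j * c l * (d2 j l m * d1 i m k))"
    by (simp add: bprod_def sum_distrib_left sum_distrib_right ac_simps)
  also have "\<dots> = (\<Sum>i\<in>UNIV. \<Sum>j\<in>UNIV. \<Sum>l\<in>UNIV. \<Sum>m\<in>UNIV. a i * b j * c l * (d2 j l m * d1 i m k))"
    by (rule sum.cong[OF refl], rule sum_rotate3[symmetric])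
  also have "\<dots> = (\<Sum>i\<in>UNIV. \<Sum>j\<in>UNIV. \<Sum>l\<in>UNIV. a i * b j * c l * (\<Sum>m\<in>UNIV. d2 j l m * d1 i m k))"
    by (simp add: sum_distrib_left)
  finally show ?thesis .
qed

lemma triple_pairing_add:
  "(\<Sum>i\<in>A. \<Sum>j\<in>B. \<Sum>l\<in>C. a i * b j * c l * X i j l) + (\<Sum>i\<in>A. \<Sum>j\<in>B. \<Sum>l\<in>C. a i * b j * c l * Y i j l) =
   (\<Sum>i\<in>A. \<Sum>j\<in>B. \<Sum>l\<in>C. a i * b j * c l * (X i j l + Y i j l :: 'k::field))"
  by (simp add: sum.distrib distrib_left)

lemma sum_mult_add:
  "(\<Sum>m\<in>A. X m * Z m) + (\<Sum>m\<in>A. Y m * Z m) = (\<Sum>m\<in>A. (X m + Y m) * (Z m :: 'k::field))"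
  by (simp add: sum.distrib distrib_right)

context
  fixes cs cp :: "'i::finite \<Rightarrow> 'i \<Rightarrow> 'i \<Rightarrow> 'k::field" and r :: "'i \<Rightarrow> 'i \<Rightarrow> 'k"
  assumes dend: "dendriform cs cp" and sym: "tsym r" and Deq: "D_equation cs cp r"
begin

text \<open>The co-dendriform identities, dual to the three dendriform axioms of A*:
  (Delta_prec \<otimes> id) Delta_prec = (id \<otimes> Delta) Delta_prec,
  (Delta_succ \<otimes> id) Delta_prec = (id \<otimes> Delta_prec) Delta_succ,
  (id \<otimes> Delta_succ) Delta_succ = (Delta \<otimes> id) Delta_succ.
  In each case both sides are quartic sums whose difference is the difference of
  two instances of the D-equation, up to the symmetries of r \<otimes> r and the
  dendriform axioms of A.\<close>
lemma coassoc_prec_prec: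
  "(\<Sum>m\<in>UNIV. Delta_prec_r cs cp r (bvec m) i j * Delta_prec_r cs cp r x m l) =
   (\<Sum>m\<in>UNIV. Delta_succ_r cs cp r (bvec m) j l * Delta_prec_r cs cp r x i m)
   + (\<Sum>m\<in>UNIV. Delta_prec_r cs cp r (bvec m) j l * Delta_prec_r cs cp r x i m)"
proof -
  note vanishing_1 = D_equation_functional[OF Deq
        coord_linear_aprod_left[of cs cp x i] coord_linear_eval[of j] coord_linear_eval[of l]]
    and vanishing_2 = D_equation_functional[OF Deq
        coord_linear_eval[of i] coord_linear_eval[of j] coord_linear_bprod_right[of cs x l]]
  show ?thesis
    unfolding sum_mult_add compose_left_prec_prec compose_right_total_prec
    by (rule rr_sum_eq_by_cancellation[OF rr_sum_eq_modulo_symmetries[where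
          Ha="\<lambda>p q s t. 0" and Hb="\<lambda>p q s t. 0" and Hc="\<lambda>p q s t. 0"
          and Hd="\<lambda>p q s t. aprod cs cp (bvec p) (bvec s) i * bvec q j * bprod cs x (bvec t) l
            - aprod cs cp (aprod cs cp (bvec p) (bvec s)) x i * bvec q j * bvec t l
            + aprod cs cp (bvec s) x i * bprod cs (bvec p) (bvec t) j * bvec q l
            - bvec q l * (bvec s i * bprod cs (aprod cs cp (bvec p) x) (bvec t) j)"
          and He="\<lambda>p q s t. 0" and Hf="\<lambda>p q s t. 0" and Hg="\<lambda>p q s t. 0", OF sym]
          vanishing_1 vanishing_2];
      simp add: aprod_assoc[OF dend, symmetric] dend_succ_prec[OF dend] dend_succ_succ[OF dend] algebra_simps)
qed

lemma coassoc_succ_prec: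
  "(\<Sum>m\<in>UNIV. Delta_succ_r cs cp r (bvec m) i j * Delta_prec_r cs cp r x m l) =
   (\<Sum>m\<in>UNIV. Delta_prec_r cs cp r (bvec m) j l * Delta_succ_r cs cp r x i m)"
proof -
  note vanishing_1 = D_equation_functional[OF Deq
        coord_linear_eval[of j] coord_linear_eval[of l] coord_linear_bprod_left[of cp x i]]
    and vanishing_2 = D_equation_functional[OF Deq
        coord_linear_eval[of j] coord_linear_bprod_right[of cs x l] coord_linear_eval[of i]]
  show ?thesis
    unfolding compose_left_succ_prec compose_right_prec_succ
    by (rule rr_sum_eq_by_cancellation[OF rr_sum_eq_modulo_symmetries[where
          Ha="\<lambda>p q s t. - (bvec s j * bprod cs x (bprod cs (bvec p) (bvec t)) l * bvec q i)
            + bvec s j * bprod cs (bvec p) (bvec t) l * bprod cp (bvec q) x i"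
          and Hb="\<lambda>p q s t. aprod cs cp (bvec p) (bvec s) j * bprod cs x (bvec q) l * bvec t i"
          and Hc="\<lambda>p q s t. 0"
          and Hd="\<lambda>p q s t. bvec q l * bvec s i * aprod cs cp (aprod cs cp (bvec p) x) (bvec t) j"
          and He="\<lambda>p q s t. 0"
          and Hf="\<lambda>p q s t. - (aprod cs cp (bvec p) (bvec s) j * bvec q l * bprod cp (bvec t) x i)"
          and Hg="\<lambda>p q s t. - (bvec p j * bprod cs x (bvec s) l * bprod cp (bvec q) (bvec t) i)
            + bvec p j * bvec s l * bprod cp (bprod cp (bvec q) (bvec t)) x i", OF sym]
          vanishing_1 vanishing_2];
      simp add: aprod_assoc[OF dend] dend_prec_prec[OF dend, symmetric]
      dend_succ_succ[OF dend, symmetric] algebra_simps)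
qed

lemma coassoc_succ_succ:
  "(\<Sum>m\<in>UNIV. Delta_succ_r cs cp r (bvec m) j l * Delta_succ_r cs cp r x i m) =
   (\<Sum>m\<in>UNIV. Delta_succ_r cs cp r (bvec m) i j * Delta_succ_r cs cp r x m l)
   + (\<Sum>m\<in>UNIV. Delta_prec_r cs cp r (bvec m) i j * Delta_succ_r cs cp r x m l)"
proof -
  note vanishing_1 = D_equation_functional[OF Deq
        coord_linear_aprod_right[of cs cp x l] coord_linear_eval[of i] coord_linear_eval[of j]]
    and vanishing_2 = D_equation_functional[OF Deq
        coord_linear_eval[of l] coord_linear_bprod_left[of cp x i] coord_linear_eval[of j]]
  show ?thesis
    unfolding sum_mult_add compose_right_succ_succ compose_left_total_succ
    by (rule rr_sum_eq_by_cancellation[OF rr_sum_eq_modulo_symmetries[where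
          Ha="\<lambda>p q s t. aprod cs cp x (bvec p) l * bvec s i * bprod cp (bvec q) (bvec t) j"
          and Hb="\<lambda>p q s t. 0"
          and Hc="\<lambda>p q s t. - (aprod cs cp x (aprod cs cp (bvec p) (bvec s)) l * bvec q i * bvec t j)
            + aprod cs cp (bvec p) (bvec s) l * bprod cp (bvec q) x i * bvec t j"
          and Hd="\<lambda>p q s t. - (bvec p i * bprod cp (bvec s) (aprod cs cp x (bvec q)) j * bvec t l)"
          and He="\<lambda>p q s t. - (bvec p l * bprod cp (bvec s) x i * bprod cp (bvec q) (bvec t) j)"
          and Hf="\<lambda>p q s t. aprod cs cp x (bvec s) l * bprod cs (bvec p) (bvec t) i * bvec q j
            - (bvec s l * bprod cp (bprod cs (bvec p) (bvec t)) x i * bvec q j)"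
          and Hg="\<lambda>p q s t. 0", OF sym]
          vanishing_1 vanishing_2];
      simp add: aprod_assoc[OF dend] dend_prec_prec[OF dend] dend_succ_prec[OF dend, symmetric] algebra_simps)
qed

lemma dual_dendriform: "dendriform (dual_succ cs cp r) (dual_prec cs cp r)"
  unfolding dendriform_def
proof (intro allI conjI ext)
  fix a b c :: "'i \<Rightarrow> 'k" and k
  note coeffs = dual_prec_def dual_succ_def
  show "bprod (dual_prec cs cp r) (bprod (dual_prec cs cp r) a b) c k =
        bprod (dual_prec cs cp r) a (aprod (dual_succ cs cp r) (dual_prec cs cp r) b c) k"
    by (simp only: aprod_def bprod_add_right bprod_nested_left bprod_nested_right
        triple_pairing_add coeffs coassoc_prec_prec)
  show "bprod (dual_prec cs cp r) (bprod (dual_succ cs cp r) a b) c k =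
        bprod (dual_succ cs cp r) a (bprod (dual_prec cs cp r) b c) k"
    by (simp only: bprod_nested_left bprod_nested_right coeffs coassoc_succ_prec)
  show "bprod (dual_succ cs cp r) a (bprod (dual_succ cs cp r) b c) k =
        bprod (dual_succ cs cp r) (aprod (dual_succ cs cp r) (dual_prec cs cp r) a b) c k"
    by (simp only: aprod_def bprod_add_left bprod_nested_left bprod_nested_right
        triple_pairing_add coeffs coassoc_succ_succ)
qed

end

theorem corollary4p4p4:
  fixes cs cp :: "'i::finite \<Rightarrow> 'i \<Rightarrow> 'i \<Rightarrow> 'k::field"
    and r :: "'i \<Rightarrow> 'i \<Rightarrow> 'k"
  assumes "dendriform cs cp"
    and "tsym r"
    and "D_equation cs cp r"
  shows "dendriform (dual_succ cs cp r) (dual_prec cs cp r) \<and>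
         D_bialgebra cs cp (dual_succ cs cp r) (dual_prec cs cp r)"
proof -
  have dual: "dendriform (dual_succ cs cp r) (dual_prec cs cp r)"
    by (rule dual_dendriform[OF assms])
  have conditions_125: "Dcond cs cp (dual_succ cs cp r) (dual_prec cs cp r)"
    unfolding Dcond_def
    using condition1[OF assms(1)] condition2[OF assms(1)] condition5[OF assms(1,2)] by blast
  have conditions_346: "Dcond (dual_succ cs cp r) (dual_prec cs cp r) cs cp"
    unfolding Dcond_def
    using condition3[OF assms(1)] condition4[OF assms(1)] condition6[OF assms(1,2)] by blast
  show ?thesis
    using dual conditions_125 conditions_346 assms(1) unfolding D_bialgebra_def by blast
qed

end
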